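(* For every positive integer $k$ there exist $\delta_k>0$ and $\rho_k>0$ depending only on $k$ such that: if $s<t$ are real and $f:[s,t)\to\mathbb{R}$ is $k$-regular, then there is an interval $J\subset[s,t)$ with $|J|>\delta_k(t-s)$ and $\inf_{x\in J}|f'(x)|\ge\rho_k\sup_{x\in[s,t)}|f'(x)|$.
   Context: For an integer $k\ge0$, a map $f:[s,t)\to\mathbb{R}$ is $k$-regular if $f$ is $C^k$ and $\sup_{x\in[s,t)}|f^{(k)}(x)|\le2\inf_{x\in[s,t)}|f^{(k)}(x)|$. *)

theory Defs
  imports "HOL-Analysis.Analysis"
begin

text \<open>A C^k function on a set S, given together with its derivatives:
  D 0 is the function, D (Suc i) is the derivative of D i (one-sided at
  endpoints, i.e. within S) for i < k, and D k is continuous on S.\<close>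
definition Ck_on :: "nat \<Rightarrow> (nat \<Rightarrow> real \<Rightarrow> real) \<Rightarrow> real set \<Rightarrow> bool" where
  "Ck_on k D S \<longleftrightarrow>
     (\<forall>i<k. \<forall>x\<in>S. (D i has_real_derivative D (Suc i) x) (at x within S)) \<and>
     continuous_on S (D k)"

definition k_regular :: "nat \<Rightarrow> (nat \<Rightarrow> real \<Rightarrow> real) \<Rightarrow> real \<Rightarrow> real \<Rightarrow> bool" where
  "k_regular k D s t \<longleftrightarrow>
     Ck_on k D {s..<t} \<and>
     bdd_above ((\<lambda>x. \<bar>D k x\<bar>) ` {s..<t}) \<and>
     (SUP x\<in>{s..<t}. \<bar>D k x\<bar>) \<le> 2 * (INF x\<in>{s..<t}. \<bar>D k x\<bar>)"

end

theory Submission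
  imports Defs
begin

text \<open>Induction on \<open>j\<close>, for the function itself rather than for its derivative: if the
  \<open>j\<close>-th derivative of \<open>g\<close> is regular, then \<open>|g|\<close> is at least a fixed fraction \<open>\<rho>\<close> of its
  supremum on a subinterval of length at least a fixed fraction \<open>\<delta>\<close> of \<open>t - s\<close>. For \<open>j = 0\<close> this
  is regularity itself. In the step let \<open>M\<close>, \<open>M\<^sub>1\<close> be the suprema of \<open>|g|\<close> and \<open>|g'|\<close>.
  If \<open>M \<ge> 2 M\<^sub>1 (t - s)\<close>, then \<open>g\<close> is \<open>M\<^sub>1\<close>-Lipschitz and stays above \<open>M / 2\<close> on a quarter
  of the interval next to a point where \<open>|g|\<close> is close to \<open>M\<close>. Otherwise the induction hypothesis
  for \<open>g'\<close> gives a long subinterval on which \<open>|g'| \<ge> \<rho> M\<^sub>1\<close>; there \<open>g'\<close> has constant sign, so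
  \<open>g\<close> is monotone with slope at least \<open>\<rho> M\<^sub>1\<close>, and \<open>|g|\<close> is large on one of its two outer
  quarters. The theorem is the case \<open>j = k - 1\<close> applied to \<open>f'\<close>.\<close>

lemma Ck_on_continuous_on: "Ck_on j D S \<Longrightarrow> continuous_on S (D 0)"
  unfolding Ck_on_def by (cases j) (auto intro: DERIV_continuous_on)

lemma k_regular_Suc_shift: "k_regular (Suc j) D s t \<Longrightarrow> k_regular j (\<lambda>i. D (Suc i)) s t"
  unfolding k_regular_def Ck_on_def by auto

definition large_on_subinterval :: "real \<Rightarrow> real \<Rightarrow> (real \<Rightarrow> real) \<Rightarrow> real \<Rightarrow> real \<Rightarrow> bool" where
  "large_on_subinterval \<delta> \<rho> g s t \<longleftrightarrow>
     (\<exists>a b. s \<le> a \<and> a < b \<and> b < t \<and> b - a > \<delta> * (t - s) \<and>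
        (\<forall>x\<in>{a..b}. \<rho> * (SUP y\<in>{s..<t}. \<bar>g y\<bar>) \<le> \<bar>g x\<bar>))"

lemma large_on_subintervalI:
  assumes "s \<le> a" "a < b" "b < t" "\<delta> * (t - s) < b - a"
    and "\<And>x. x \<in> {a..b} \<Longrightarrow> \<rho> * (SUP y\<in>{s..<t}. \<bar>g y\<bar>) \<le> \<bar>g x\<bar>"
  shows "large_on_subinterval \<delta> \<rho> g s t"
  using assms unfolding large_on_subinterval_def by blast

lemma large_on_subintervalE:
  assumes "large_on_subinterval \<delta> \<rho> g s t"
  obtains a b where "s \<le> a" "a < b" "b < t" "\<delta> * (t - s) < b - a"
    "\<And>x. x \<in> {a..b} \<Longrightarrow> \<rho> * (SUP y\<in>{s..<t}. \<bar>g y\<bar>) \<le> \<bar>g x\<bar>"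
proof -
  obtain a b where "s \<le> a" "a < b" "b < t" "\<delta> * (t - s) < b - a"
    "\<forall>x\<in>{a..b}. \<rho> * (SUP y\<in>{s..<t}. \<bar>g y\<bar>) \<le> \<bar>g x\<bar>"
    using assms unfolding large_on_subinterval_def by blast
  then show thesis using that by blast
qed

lemma large_on_subinterval_mono:
  assumes "large_on_subinterval \<delta> \<rho> g s t" "\<delta>' \<le> \<delta>" "\<rho>' \<le> \<rho>"
    and "bdd_above ((\<lambda>x. \<bar>g x\<bar>) ` {s..<t})"
  shows "large_on_subinterval \<delta>' \<rho>' g s t"
proof -
  obtain a b where ab: "s \<le> a" "a < b" "b < t" "\<delta> * (t - s) < b - a"
    and large: "\<And>x. x \<in> {a..b} \<Longrightarrow> \<rho> * (SUP y\<in>{s..<t}. \<bar>g y\<bar>) \<le> \<bar>g x\<bar>"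
    using assms(1) by (rule large_on_subintervalE) blast
  have "\<bar>g s\<bar> \<le> (SUP y\<in>{s..<t}. \<bar>g y\<bar>)"
    using ab by (intro cSUP_upper assms(4)) auto
  then have \<rho>: "\<rho>' * (SUP y\<in>{s..<t}. \<bar>g y\<bar>) \<le> \<rho> * (SUP y\<in>{s..<t}. \<bar>g y\<bar>)"
    using assms(3) by (intro mult_right_mono) auto
  have "\<delta>' * (t - s) \<le> \<delta> * (t - s)"
    using ab assms(2) by (intro mult_right_mono) auto
  then have "\<delta>' * (t - s) < b - a" using ab(4) by linarith
  then show ?thesis
  proof (rule large_on_subintervalI[OF ab(1-3)])
    show "\<rho>' * (SUP y\<in>{s..<t}. \<bar>g y\<bar>) \<le> \<bar>g x\<bar>" if "x \<in> {a..b}" for x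
      using large[OF that] \<rho> by linarith
  qed
qed

lemma large_on_subinterval_if_SUP_le_twice_INF:
  assumes "s < t" "(SUP x\<in>{s..<t}. \<bar>g x\<bar>) \<le> 2 * (INF x\<in>{s..<t}. \<bar>g x\<bar>)"
  shows "large_on_subinterval (1/4) (1/2) g s t"
proof (rule large_on_subintervalI[of s s "(s + t) / 2"])
  fix x assume "x \<in> {s..(s + t) / 2}"
  then have "(INF y\<in>{s..<t}. \<bar>g y\<bar>) \<le> \<bar>g x\<bar>"
    using assms(1) by (intro cINF_lower bdd_belowI2[of _ 0]) auto
  then show "1/2 * (SUP y\<in>{s..<t}. \<bar>g y\<bar>) \<le> \<bar>g x\<bar>"
    using assms(2) by linarith
qed (use assms(1) in \<open>auto simp: field_simps\<close>)

lemma lipschitz_on_if_abs_deriv_le: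
  fixes g g' :: "real \<Rightarrow> real"
  assumes "convex S" "S \<noteq> {}"
    and der: "\<And>z. z \<in> S \<Longrightarrow> (g has_real_derivative g' z) (at z within S)"
    and le: "\<And>z. z \<in> S \<Longrightarrow> \<bar>g' z\<bar> \<le> B"
  shows "B-lipschitz_on S g"
proof (rule lipschitz_onI)
  show "dist (g x) (g y) \<le> B * dist x y" if "x \<in> S" "y \<in> S" for x y
    using field_differentiable_bound[OF assms(1) der _ that, of B] le
    unfolding dist_real_def by auto
  obtain z where "z \<in> S" using \<open>S \<noteq> {}\<close> by blast
  with le[of z] show "0 \<le> B" by linarith
qed

lemma bdd_above_abs_if_lipschitz_on:
  fixes g :: "real \<Rightarrow> real"
  assumes "L-lipschitz_on {s..<t} g"
  shows "bdd_above ((\<lambda>x. \<bar>g x\<bar>) ` {s..<t})"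
proof (rule bdd_aboveI2)
  fix x assume x: "x \<in> {s..<t}"
  have "\<bar>g x - g s\<bar> \<le> L * \<bar>x - s\<bar>"
    using lipschitz_onD[OF assms x, of s] x by (simp add: dist_real_def)
  also have "\<dots> \<le> L * (t - s)"
    using x lipschitz_on_nonneg[OF assms] by (intro mult_left_mono) auto
  finally show "\<bar>g x\<bar> \<le> \<bar>g s\<bar> + L * (t - s)" by linarith
qed

lemma large_on_subinterval_if_lipschitz:
  assumes st: "s < t" and bdd: "bdd_above ((\<lambda>x. \<bar>g x\<bar>) ` {s..<t})"
    and lip: "L-lipschitz_on {s..<t} g" and small: "2 * L * (t - s) \<le> (SUP x\<in>{s..<t}. \<bar>g x\<bar>)"
  shows "large_on_subinterval (1/8) (1/2) g s t"
proof -
  define M where "M = (SUP x\<in>{s..<t}. \<bar>g x\<bar>)"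
  obtain x0 where x0: "x0 \<in> {s..<t}" "3/4 * M \<le> \<bar>g x0\<bar>"
  proof (cases "M > 0")
    case True
    then have "3/4 * M < M" by simp
    moreover have "{s..<t} \<noteq> {}" using st by simp
    ultimately obtain x where "x \<in> {s..<t}" "3/4 * M < \<bar>g x\<bar>"
      using less_cSUP_iff[OF _ bdd, of "3/4 * M"] unfolding M_def by blast
    then show thesis by (intro that) auto
  next
    case False
    then show thesis using st by (intro that[of s]) auto
  qed
  have near: "1/2 * M \<le> \<bar>g x\<bar>" if x: "x \<in> {s..<t}" "\<bar>x - x0\<bar> \<le> (t - s) / 4" for x
  proof -
    have "\<bar>g x - g x0\<bar> \<le> L * \<bar>x - x0\<bar>"
      using lipschitz_onD[OF lip x(1) x0(1)] by (simp add: dist_real_def)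
    also have "\<dots> \<le> L * ((t - s) / 4)"
      using x lipschitz_on_nonneg[OF lip] by (intro mult_left_mono) auto
    also have "\<dots> \<le> M / 8" using small unfolding M_def by simp
    finally show ?thesis using x0 by linarith
  qed
  show ?thesis
  proof (cases "x0 \<le> (s + t) / 2")
    case True
    show ?thesis
    proof (rule large_on_subintervalI[of s x0 "x0 + (t - s) / 4"])
      fix x assume "x \<in> {x0..x0 + (t - s) / 4}"
      then have "x \<in> {s..<t}" "\<bar>x - x0\<bar> \<le> (t - s) / 4"
        using x0 st True by (auto simp: field_simps)
      then show "1/2 * (SUP y\<in>{s..<t}. \<bar>g y\<bar>) \<le> \<bar>g x\<bar>"
        unfolding M_def[symmetric] by (rule near)
    qed (use x0 st True in \<open>auto simp: field_simps\<close>)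
  next
    case False
    show ?thesis
    proof (rule large_on_subintervalI[of s "x0 - (t - s) / 4" x0])
      fix x assume "x \<in> {x0 - (t - s) / 4..x0}"
      then have "x \<in> {s..<t}" "\<bar>x - x0\<bar> \<le> (t - s) / 4"
        using x0 st False by (auto simp: field_simps)
      then show "1/2 * (SUP y\<in>{s..<t}. \<bar>g y\<bar>) \<le> \<bar>g x\<bar>"
        unfolding M_def[symmetric] by (rule near)
    qed (use x0 st False in \<open>auto simp: field_simps\<close>)
  qed
qed

lemma continuous_on_abs_ge_obtains_sign:
  fixes h :: "real \<Rightarrow> real"
  assumes "connected S" "continuous_on S h"
    and ge: "\<And>x. x \<in> S \<Longrightarrow> \<sigma> \<le> \<bar>h x\<bar>" and "\<sigma> > 0"
  obtains \<epsilon> :: real where "\<bar>\<epsilon>\<bar> = 1" "\<And>x. x \<in> S \<Longrightarrow> \<sigma> \<le> \<epsilon> * h x"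
proof -
  have "(\<forall>x\<in>S. h x > 0) \<or> (\<forall>x\<in>S. h x < 0)"
  proof (rule ccontr)
    assume "\<not> ?thesis"
    then obtain p q where "p \<in> S" "q \<in> S" "h p \<le> 0" "0 \<le> h q"
      by (auto simp: not_less)
    moreover have "is_interval (h ` S)"
      using assms(1,2) connected_continuous_image is_interval_connected_1 by blast
    ultimately have "0 \<in> h ` S"
      unfolding is_interval_1 by blast
    then obtain x where "x \<in> S" "h x = 0" by auto
    then show False using ge[of x] \<open>\<sigma> > 0\<close> by simp
  qed
  then show thesis
  proof (elim disjE)
    assume "\<forall>x\<in>S. h x > 0"
    then show thesis using ge by (intro that[of 1]) force+
  next
    assume "\<forall>x\<in>S. h x < 0"
    then show thesis using ge by (intro that[of "-1"]) force+
  qed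
qed

lemma growth_ge_if_deriv_ge:
  fixes g g' :: "real \<Rightarrow> real"
  assumes der: "\<And>z. z \<in> {a..b} \<Longrightarrow> (g has_real_derivative g' z) (at z within {a..b})"
    and ge: "\<And>z. z \<in> {a..b} \<Longrightarrow> \<sigma> \<le> g' z"
    and xy: "a \<le> x" "x \<le> y" "y \<le> b"
  shows "\<sigma> * (y - x) \<le> g y - g x"
proof (cases "x = y")
  case False
  then have "x < y" using xy by simp
  have "(g has_derivative (*) (g' z)) (at z within {x..y})" if "x \<le> z" "z \<le> y" for z
    using has_field_derivative_subset[OF der] that xy
    by (simp add: has_field_derivative_def)
  then obtain z where z: "z \<in> {x<..<y}" "g y - g x = g' z * (y - x)"
    using mvt_simple[OF \<open>x < y\<close>, of g "\<lambda>z. (*) (g' z)"] by auto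
  have "\<sigma> * (y - x) \<le> g' z * (y - x)"
    using z(1) xy \<open>x < y\<close> by (intro mult_right_mono ge) auto
  then show ?thesis using z(2) by simp
qed simp

lemma abs_ge_on_quarter_if_abs_deriv_ge:
  fixes g g' :: "real \<Rightarrow> real"
  assumes "a < b"
    and der: "\<And>z. z \<in> {a..b} \<Longrightarrow> (g has_real_derivative g' z) (at z within {a..b})"
    and cont: "continuous_on {a..b} g'"
    and ge: "\<And>z. z \<in> {a..b} \<Longrightarrow> \<sigma> \<le> \<bar>g' z\<bar>" and "\<sigma> > 0"
  obtains c d where "a \<le> c" "d \<le> b" "d - c = (b - a) / 4"
    "\<And>x. x \<in> {c..d} \<Longrightarrow> \<sigma> * (b - a) / 4 \<le> \<bar>g x\<bar>"
proof -
  obtain \<epsilon> :: real where \<epsilon>: "\<bar>\<epsilon>\<bar> = 1" "\<And>z. z \<in> {a..b} \<Longrightarrow> \<sigma> \<le> \<epsilon> * g' z"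
    using continuous_on_abs_ge_obtains_sign[OF connected_Icc cont ge \<open>\<sigma> > 0\<close>] by blast
  have growth: "\<sigma> * (y - x) \<le> \<epsilon> * g y - \<epsilon> * g x" if "a \<le> x" "x \<le> y" "y \<le> b" for x y
    using growth_ge_if_deriv_ge[of a b "\<lambda>x. \<epsilon> * g x" "\<lambda>x. \<epsilon> * g' x", OF _ \<epsilon>(2) that]
      DERIV_cmult[OF der] by blast
  have abs_g: "\<bar>g x\<bar> = \<bar>\<epsilon> * g x\<bar>" for x using \<epsilon>(1) by (simp add: abs_mult)
  define m where "m = (a + b) / 2"
  show thesis
  proof (cases "\<epsilon> * g m \<ge> 0")
    case True
    show thesis
    proof (rule that[of "m + (b - a) / 4" b])
      fix x assume x: "x \<in> {m + (b - a) / 4..b}"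
      then have "(b - a) / 4 \<le> x - m" by (auto simp: le_diff_eq)
      then have "\<sigma> * ((b - a) / 4) \<le> \<sigma> * (x - m)"
        using \<open>\<sigma> > 0\<close> by (intro mult_left_mono) auto
      moreover have "\<sigma> * (x - m) \<le> \<epsilon> * g x - \<epsilon> * g m"
        using x \<open>a < b\<close> by (intro growth) (auto simp: m_def field_simps)
      ultimately show "\<sigma> * (b - a) / 4 \<le> \<bar>g x\<bar>"
        using True abs_g[of x] by linarith
    qed (use \<open>a < b\<close> in \<open>simp_all add: m_def field_simps\<close>)
  next
    case False
    show thesis
    proof (rule that[of a "m - (b - a) / 4"])
      fix x assume x: "x \<in> {a..m - (b - a) / 4}"
      then have "(b - a) / 4 \<le> m - x" by (auto simp: le_diff_eq)
      then have "\<sigma> * ((b - a) / 4) \<le> \<sigma> * (m - x)"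
        using \<open>\<sigma> > 0\<close> by (intro mult_left_mono) auto
      moreover have "\<sigma> * (m - x) \<le> \<epsilon> * g m - \<epsilon> * g x"
        using x \<open>a < b\<close> by (intro growth) (auto simp: m_def field_simps)
      ultimately show "\<sigma> * (b - a) / 4 \<le> \<bar>g x\<bar>"
        using False abs_g[of x] by linarith
    qed (use \<open>a < b\<close> in \<open>simp_all add: m_def field_simps\<close>)
  qed
qed

lemma large_on_subinterval_if_deriv_large:
  fixes g g' :: "real \<Rightarrow> real"
  assumes st: "s < t"
    and der: "\<And>z. z \<in> {s..<t} \<Longrightarrow> (g has_real_derivative g' z) (at z within {s..<t})"
    and cont: "continuous_on {s..<t} g'"
    and bdd: "bdd_above ((\<lambda>x. \<bar>g x\<bar>) ` {s..<t})"
    and large': "large_on_subinterval \<delta> \<rho> g' s t" and "\<delta> \<ge> 0" "\<rho> > 0"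
    and steep: "(SUP x\<in>{s..<t}. \<bar>g x\<bar>) < 2 * (SUP x\<in>{s..<t}. \<bar>g' x\<bar>) * (t - s)"
  shows "large_on_subinterval (\<delta> / 4) (\<rho> * \<delta> / 8) g s t"
proof -
  define M where "M = (SUP x\<in>{s..<t}. \<bar>g x\<bar>)"
  define M1 where "M1 = (SUP x\<in>{s..<t}. \<bar>g' x\<bar>)"
  obtain a b where ab: "s \<le> a" "a < b" "b < t" "\<delta> * (t - s) < b - a"
    and ge: "\<And>x. x \<in> {a..b} \<Longrightarrow> \<rho> * M1 \<le> \<bar>g' x\<bar>"
    using large' unfolding M1_def by (rule large_on_subintervalE) blast
  have sub: "{a..b} \<subseteq> {s..<t}" using ab by auto
  have "\<bar>g s\<bar> \<le> M"
    using st unfolding M_def by (intro cSUP_upper bdd) auto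
  then have "0 < 2 * M1 * (t - s)" using steep unfolding M_def M1_def by linarith
  then have "M1 > 0" using st by (simp add: zero_less_mult_iff)
  obtain c d where cd: "a \<le> c" "d \<le> b" "d - c = (b - a) / 4"
    and big: "\<And>x. x \<in> {c..d} \<Longrightarrow> \<rho> * M1 * (b - a) / 4 \<le> \<bar>g x\<bar>"
  proof (rule abs_ge_on_quarter_if_abs_deriv_ge[OF \<open>a < b\<close>, of g g' "\<rho> * M1"])
    show "(g has_real_derivative g' z) (at z within {a..b})" if "z \<in> {a..b}" for z
      using has_field_derivative_subset[OF der sub] that sub by auto
    show "continuous_on {a..b} g'" using cont sub by (rule continuous_on_subset)
  qed (use ge \<open>\<rho> > 0\<close> \<open>M1 > 0\<close> in auto)
  show ?thesis
  proof (rule large_on_subintervalI[of s c d])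
    have "\<delta> / 4 * (t - s) = \<delta> * (t - s) / 4" by simp
    also have "\<dots> < (b - a) / 4" using ab(4) by simp
    also have "\<dots> = d - c" using cd(3) by simp
    finally show "\<delta> / 4 * (t - s) < d - c" .
    fix x assume x: "x \<in> {c..d}"
    have "\<rho> * \<delta> / 8 * M \<le> \<rho> * \<delta> / 8 * (2 * M1 * (t - s))"
      using steep \<open>\<delta> \<ge> 0\<close> \<open>\<rho> > 0\<close> unfolding M_def M1_def by (intro mult_left_mono) auto
    also have "\<dots> = \<rho> * M1 * (\<delta> * (t - s)) / 4" by simp
    also have "\<dots> \<le> \<rho> * M1 * (b - a) / 4"
      using ab \<open>\<rho> > 0\<close> \<open>M1 > 0\<close> by (intro divide_right_mono mult_left_mono) auto
    also have "\<dots> \<le> \<bar>g x\<bar>" using big[OF x] .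
    finally show "\<rho> * \<delta> / 8 * (SUP y\<in>{s..<t}. \<bar>g y\<bar>) \<le> \<bar>g x\<bar>" unfolding M_def .
  qed (use ab cd in \<open>auto simp: field_simps\<close>)
qed

text \<open>The boundedness conjunct is part of the invariant because the step needs \<open>SUP |D 1|\<close> to be a
  genuine supremum; for an unbounded set of reals \<open>Sup\<close> is unspecified.\<close>
definition regular_large_on_subinterval :: "nat \<Rightarrow> real \<Rightarrow> real \<Rightarrow> bool" where
  "regular_large_on_subinterval j \<delta> \<rho> \<longleftrightarrow>
     (\<forall>s t D. s < t \<longrightarrow> k_regular j D s t \<longrightarrow>
        bdd_above ((\<lambda>x. \<bar>D 0 x\<bar>) ` {s..<t}) \<and> large_on_subinterval \<delta> \<rho> (D 0) s t)"

lemma regular_large_on_subinterval_0: "regular_large_on_subinterval 0 (1/4) (1/2)"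
  unfolding regular_large_on_subinterval_def k_regular_def
  by (auto intro: large_on_subinterval_if_SUP_le_twice_INF)

lemma regular_large_on_subinterval_Suc:
  assumes IH: "regular_large_on_subinterval j \<delta> \<rho>" and "\<delta> \<ge> 0" "\<rho> > 0"
  shows "regular_large_on_subinterval (Suc j) (min (1/8) (\<delta>/4)) (min (1/2) (\<rho> * \<delta> / 8))"
  unfolding regular_large_on_subinterval_def
proof (intro allI impI)
  fix s t :: real and D :: "nat \<Rightarrow> real \<Rightarrow> real"
  assume st: "s < t" and reg: "k_regular (Suc j) D s t"
  let ?S = "{s..<t}"
  have shift: "k_regular j (\<lambda>i. D (Suc i)) s t"
    using reg by (rule k_regular_Suc_shift)
  have bdd1: "bdd_above ((\<lambda>x. \<bar>D 1 x\<bar>) ` ?S)" and large1: "large_on_subinterval \<delta> \<rho> (D 1) s t"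
    using IH[unfolded regular_large_on_subinterval_def, rule_format, OF st shift] by simp_all
  have cont1: "continuous_on ?S (D 1)"
    using shift unfolding k_regular_def by (auto dest: Ck_on_continuous_on)
  have der: "\<And>z. z \<in> ?S \<Longrightarrow> (D 0 has_real_derivative D 1 z) (at z within ?S)"
    using reg unfolding k_regular_def Ck_on_def by auto
  define M1 where "M1 = (SUP x\<in>?S. \<bar>D 1 x\<bar>)"
  have "\<And>z. z \<in> ?S \<Longrightarrow> \<bar>D 1 z\<bar> \<le> M1"
    unfolding M1_def by (rule cSUP_upper[OF _ bdd1])
  then have lip: "M1-lipschitz_on ?S (D 0)"
    using st by (intro lipschitz_on_if_abs_deriv_le[OF _ _ der]) auto
  then have bdd0: "bdd_above ((\<lambda>x. \<bar>D 0 x\<bar>) ` ?S)"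
    by (rule bdd_above_abs_if_lipschitz_on)
  moreover have "large_on_subinterval (min (1/8) (\<delta>/4)) (min (1/2) (\<rho> * \<delta> / 8)) (D 0) s t"
  proof (cases "2 * M1 * (t - s) \<le> (SUP x\<in>?S. \<bar>D 0 x\<bar>)")
    case True
    then have "large_on_subinterval (1/8) (1/2) (D 0) s t"
      by (rule large_on_subinterval_if_lipschitz[OF st bdd0 lip])
    then show ?thesis by (rule large_on_subinterval_mono) (auto intro: bdd0)
  next
    case False
    then have steep: "(SUP x\<in>?S. \<bar>D 0 x\<bar>) < 2 * (SUP x\<in>?S. \<bar>D 1 x\<bar>) * (t - s)"
      unfolding M1_def by simp
    have "large_on_subinterval (\<delta> / 4) (\<rho> * \<delta> / 8) (D 0) s t"
      by (rule large_on_subinterval_if_deriv_large[OF st _ cont1 bdd0 large1 \<open>\<delta> \<ge> 0\<close> \<open>\<rho> > 0\<close> steep])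
        (use der in blast)
    then show ?thesis by (rule large_on_subinterval_mono) (auto intro: bdd0)
  qed
  ultimately show "bdd_above ((\<lambda>x. \<bar>D 0 x\<bar>) ` ?S) \<and>
      large_on_subinterval (min (1/8) (\<delta>/4)) (min (1/2) (\<rho> * \<delta> / 8)) (D 0) s t" ..
qed

lemma ex_regular_large_on_subinterval: "\<exists>\<delta>>0. \<exists>\<rho>>0. regular_large_on_subinterval j \<delta> \<rho>"
proof (induction j)
  case 0
  have "(1/4 :: real) > 0" "(1/2 :: real) > 0" by simp_all
  with regular_large_on_subinterval_0 show ?case by blast
next
  case (Suc j)
  then obtain \<delta> \<rho> where "\<delta> > 0" "\<rho> > 0" and large: "regular_large_on_subinterval j \<delta> \<rho>"
    by blast
  then have "min (1/8) (\<delta>/4) > 0" "min (1/2) (\<rho> * \<delta> / 8) > 0" by simp_all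
  moreover have "regular_large_on_subinterval (Suc j) (min (1/8) (\<delta>/4)) (min (1/2) (\<rho> * \<delta> / 8))"
    using large \<open>\<delta> > 0\<close> \<open>\<rho> > 0\<close> by (intro regular_large_on_subinterval_Suc) auto
  ultimately show ?case by blast
qed

theorem mainTheorem18:
  fixes k :: nat
  assumes "k > 0"
  shows "\<exists>\<delta>>0. \<exists>\<rho>>0. \<forall>s t :: real. \<forall>f :: real \<Rightarrow> real. \<forall>D :: nat \<Rightarrow> real \<Rightarrow> real.
           s < t \<longrightarrow> D 0 = f \<longrightarrow> k_regular k D s t \<longrightarrow>
           (\<exists>a b. s \<le> a \<and> a < b \<and> b < t \<and> b - a > \<delta> * (t - s) \<and>
              (INF x\<in>{a..b}. \<bar>D 1 x\<bar>) \<ge> \<rho> * (SUP x\<in>{s..<t}. \<bar>D 1 x\<bar>))"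
proof -
  obtain j where k: "k = Suc j" using assms by (cases k) auto
  obtain \<delta> \<rho> where "\<delta> > 0" "\<rho> > 0" and large: "regular_large_on_subinterval j \<delta> \<rho>"
    using ex_regular_large_on_subinterval by blast
  have "\<exists>a b. s \<le> a \<and> a < b \<and> b < t \<and> b - a > \<delta> * (t - s) \<and>
          (INF x\<in>{a..b}. \<bar>D 1 x\<bar>) \<ge> \<rho> * (SUP x\<in>{s..<t}. \<bar>D 1 x\<bar>)"
    if "s < t" "k_regular k D s t" for s t :: real and D :: "nat \<Rightarrow> real \<Rightarrow> real"
  proof -
    from that(2) have shift: "k_regular j (\<lambda>i. D (Suc i)) s t"
      unfolding k by (rule k_regular_Suc_shift)
    have "large_on_subinterval \<delta> \<rho> (D 1) s t"
      using large[unfolded regular_large_on_subinterval_def, rule_format, OF \<open>s < t\<close> shift] by simp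
    then obtain a b where "s \<le> a" "a < b" "b < t" "\<delta> * (t - s) < b - a"
      and large1: "\<And>x. x \<in> {a..b} \<Longrightarrow> \<rho> * (SUP y\<in>{s..<t}. \<bar>D 1 y\<bar>) \<le> \<bar>D 1 x\<bar>"
      by (rule large_on_subintervalE) blast
    moreover from \<open>a < b\<close> have "\<rho> * (SUP y\<in>{s..<t}. \<bar>D 1 y\<bar>) \<le> (INF x\<in>{a..b}. \<bar>D 1 x\<bar>)"
      by (intro cINF_greatest large1) auto
    ultimately show ?thesis by blast
  qed
  then show ?thesis using \<open>\<delta> > 0\<close> \<open>\<rho> > 0\<close> by blast
qed

end
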